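(* Let $\phi(\mu)=\sum_{i=1}^n\operatorname{arccot}\mu_i$ for $\mu\in\mathbb{R}^n$, let $\Gamma=\{\mu\in\mathbb{R}^n:0<\phi(\mu)<\pi\}$ and $f(\mu)=\cot\phi(\mu)$ on $\Gamma$. For $\sigma\in\mathbb{R}$ let $\Gamma^\sigma=\{\mu\in\mathbb{R}^n:0<\phi(\mu)<\operatorname{arccot}\sigma\}$. Then for any $\sigma,\sigma'\in\mathbb{R}$ with $\sigma<\sigma'$ there exists a constant $N>0$, depending only on $\sigma$ and $\sigma'$, such that $$\Gamma^\sigma+N\mathbf 1\subset\Gamma^{\sigma'},$$ where $\mathbf 1=(1,\dots,1)$.
   Context: $\operatorname{arccot}:\mathbb{R}\to(0,\pi)$ denotes the inverse of $\cot$ on $(0,\pi)$. *)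

theory Defs
  imports "HOL-Analysis.Analysis"
begin

definition arccot :: "real \<Rightarrow> real" where
  "arccot x = (THE y. 0 < y \<and> y < pi \<and> cot y = x)"

definition phi :: "real^'n \<Rightarrow> real" where
  "phi \<mu> = (\<Sum>i\<in>UNIV. arccot (\<mu> $ i))"

definition Gamma_sigma :: "real \<Rightarrow> (real^'n) set" where
  "Gamma_sigma \<sigma> = {\<mu>. 0 < phi \<mu> \<and> phi \<mu> < arccot \<sigma>}"

end

theory Submission
  imports Defs
begin

text \<open>A point of \<open>\<Gamma>\<^sup>\<sigma>\<close> has every \<open>arccot \<mu>\<^sub>i\<close> below \<open>\<phi>(\<mu>) < arccot \<sigma>\<close>, hence every
  \<open>\<mu>\<^sub>i > \<sigma>\<close>. After the shift by \<open>N\<close>, each summand of \<open>\<phi>\<close> is below \<open>arccot (\<sigma> + N)\<close>,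
  which tends to \<open>0\<close> as \<open>N \<rightarrow> \<infinity>\<close>; so for large \<open>N\<close> the sum of the \<open>n\<close> summands
  drops below \<open>arccot \<sigma>'\<close>, while it stays positive.\<close>

lemma arccot_eq_pi_half_minus_arctan: "arccot x = pi/2 - arctan x"
  unfolding arccot_def
proof (rule the_equality)
  have "sin (arctan x) / cos (arctan x) = x"
    using tan_arctan[of x] by (simp add: tan_def)
  then show "0 < pi/2 - arctan x \<and> pi/2 - arctan x < pi \<and> cot (pi/2 - arctan x) = x"
    using arctan_bounded[of x] by (auto simp: cot_def sin_diff cos_diff)
next
  fix y assume y: "0 < y \<and> y < pi \<and> cot y = x"
  have "tan (pi/2 - y) = x"
    using y by (simp add: tan_def cot_def sin_diff cos_diff)
  moreover have "arctan (tan (pi/2 - y)) = pi/2 - y"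
    by (rule arctan_tan) (use y in auto)
  ultimately show "y = pi/2 - arctan x" by simp
qed

lemma arccot_pos: "0 < arccot x"
  using arctan_bounded[of x] by (simp add: arccot_eq_pi_half_minus_arctan)

lemma arccot_less_iff: "arccot x < arccot y \<longleftrightarrow> y < x"
  by (simp add: arccot_eq_pi_half_minus_arctan arctan_less_iff)

lemma tendsto_arccot_at_top: "(arccot \<longlongrightarrow> 0) at_top"
proof -
  have "((\<lambda>x. pi/2 - arctan x) \<longlongrightarrow> pi/2 - pi/2) at_top"
    using tendsto_arctan_at_top by (intro tendsto_diff tendsto_const) (simp add: filterlim_def)
  then show ?thesis by (simp add: arccot_eq_pi_half_minus_arctan[abs_def])
qed

lemma exists_shift_arccot_less:
  assumes "0 < e"
  shows "\<exists>N>0. arccot (a + N) < e"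
proof -
  have "eventually (\<lambda>x. arccot x < e) at_top"
    using order_tendstoD(2)[OF tendsto_arccot_at_top assms] .
  then obtain X where X: "\<And>x. x \<ge> X \<Longrightarrow> arccot x < e"
    by (auto simp: eventually_at_top_linorder)
  show ?thesis
    by (rule exI[of _ "max 1 (X - a)"]) (auto intro: X)
qed

lemma phi_pos: "0 < phi \<mu>"
  unfolding phi_def by (rule sum_pos) (auto simp: arccot_pos)

lemma arccot_component_le_phi: "arccot (\<mu> $ i) \<le> phi \<mu>"
  unfolding phi_def by (rule member_le_sum) (auto intro: less_imp_le arccot_pos)

lemma Gamma_sigma_component_gt:
  assumes "\<mu> \<in> Gamma_sigma \<sigma>"
  shows "\<sigma> < \<mu> $ i"
proof -
  have "arccot (\<mu> $ i) < arccot \<sigma>"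
    using arccot_component_le_phi[of \<mu> i] assms by (simp add: Gamma_sigma_def)
  then show ?thesis by (simp add: arccot_less_iff)
qed

lemma phi_less_card_mult_arccot:
  fixes \<mu> :: "real^'n"
  assumes "\<And>i. c < \<mu> $ i"
  shows "phi \<mu> < real CARD('n) * arccot c"
proof -
  have "phi \<mu> < (\<Sum>i\<in>(UNIV::'n set). arccot c)"
    unfolding phi_def by (rule sum_strict_mono) (auto simp: arccot_less_iff assms)
  then show ?thesis by simp
qed

theorem proposition2p6:
  fixes \<sigma> \<sigma>' :: real
  assumes "\<sigma> < \<sigma>'"
  shows "\<exists>N>0. \<forall>\<mu> \<in> (Gamma_sigma \<sigma> :: (real^'n) set).
           \<mu> + (\<chi> i. N) \<in> Gamma_sigma \<sigma>'"
proof -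
  define n where "n = real CARD('n)"
  have "n > 0" unfolding n_def by simp
  then obtain N where "N > 0" and N: "arccot (\<sigma> + N) < arccot \<sigma>' / n"
    using exists_shift_arccot_less[of "arccot \<sigma>' / n" \<sigma>] arccot_pos by auto
  have "\<mu> + (\<chi> i. N) \<in> Gamma_sigma \<sigma>'" if "\<mu> \<in> Gamma_sigma \<sigma>" for \<mu> :: "real^'n"
  proof -
    have "\<sigma> + N < (\<mu> + (\<chi> i. N)) $ i" for i
      using Gamma_sigma_component_gt[OF that] by simp
    then have "phi (\<mu> + (\<chi> i. N)) < n * arccot (\<sigma> + N)"
      unfolding n_def by (rule phi_less_card_mult_arccot)
    also have "\<dots> < arccot \<sigma>'"
      using N \<open>n > 0\<close> by (simp add: field_simps)
    finally show ?thesis by (simp add: Gamma_sigma_def phi_pos)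
  qed
  with \<open>N > 0\<close> show ?thesis by blast
qed

end
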